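(* Let $(f,g)$ and $(f',g')$ be two models in the model class $\Theta$, with induced conditional distributions $p_{f,g}$, $p_{f',g'}$ and logit vectors $u(x)$, $u'(x)$. Then $$d_{\mathrm{logit}}^2(p_{f,g},p_{f',g'}) \;\ge\; 2\, d_{\mathrm{KL}}(p_{f,g},p_{f',g'}).$$ If moreover there is $0<\tau<1/3$ such that both $(f,g)$ and $(f',g')$ are $\tau$-lower bounded, then $$d_{\mathrm{logit}}^2(p_{f,g},p_{f',g'}) \;\le\; \frac{4\log(\tau)^2}{\tau}\, d_{\mathrm{KL}}(p_{f,g},p_{f',g'}).$$
   Context: Let $\mathcal X$ be an input space with data distribution $p_x$, and $\mathcal Y=\{y_1,\dots,y_k\}$ a finite label set. The model class $\Theta$ consists of pairs $(f,g)$ with $f:\mathcal X\to\mathbb R^m$ (embedding) and $g:\mathcal Y\to\mathbb R^m$ (unembedding), normalized so that $\sum_{y\in\mathcal Y} g(y)=0$. Each model induces $p_{f,g}(y\mid x)=\exp(f(x)^\top g(y))/\sum_{y'\in\mathcal Y}\exp(f(x)^\top g(y'))$. Its logit vector is $u(x)=(f(x)^\top g(y_1),\dots,f(x)^\top g(y_k))^\top\in\mathbb R^k$ (similarly $u'$ for $(f',g')$). The logit distance is $d_{\mathrm{logit}}^2(p_{f,g},p_{f',g'})=\mathbb E_{x\sim p_x}\|u(x)-u'(x)\|_2^2$, and $d_{\mathrm{KL}}(p_{f,g},p_{f',g'})=\mathbb E_{x\sim p_x}\big[\mathrm{KL}(p_{f,g}(\cdot\mid x)\,\|\,p_{f',g'}(\cdot\mid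 x))\big]$. A model is $\tau$-lower bounded ($\tau>0$) if for $p_x$-almost every $x$, $\min_{y\in\mathcal Y} p_{f,g}(y\mid x)\ge\tau$. *)

theory Defs
  imports "HOL-Probability.Probability"
begin

definition in_model_class ::
  "'x measure \<Rightarrow> 'y set \<Rightarrow> ('x \<Rightarrow> 'v::euclidean_space) \<Rightarrow> ('y \<Rightarrow> 'v) \<Rightarrow> bool" where
  "in_model_class M Y f g \<longleftrightarrow> f \<in> borel_measurable M \<and> (\<Sum>y\<in>Y. g y) = 0"

definition p_model ::
  "'y set \<Rightarrow> ('x \<Rightarrow> 'v::euclidean_space) \<Rightarrow> ('y \<Rightarrow> 'v) \<Rightarrow> 'x \<Rightarrow> 'y \<Rightarrow> real" where
  "p_model Y f g x y = exp (f x \<bullet> g y) / (\<Sum>y'\<in>Y. exp (f x \<bullet> g y'))"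

definition logit :: "('x \<Rightarrow> 'v::euclidean_space) \<Rightarrow> ('y \<Rightarrow> 'v) \<Rightarrow> 'x \<Rightarrow> 'y \<Rightarrow> real" where
  "logit f g x y = f x \<bullet> g y"

definition d_logit2 ::
  "'x measure \<Rightarrow> 'y set \<Rightarrow> ('x \<Rightarrow> 'v::euclidean_space) \<Rightarrow> ('y \<Rightarrow> 'v)
     \<Rightarrow> ('x \<Rightarrow> 'v) \<Rightarrow> ('y \<Rightarrow> 'v) \<Rightarrow> ennreal" where
  "d_logit2 M Y f g f' g' =
     (\<integral>\<^sup>+ x. ennreal (\<Sum>y\<in>Y. (logit f g x y - logit f' g' x y)\<^sup>2) \<partial>M)"

definition KL_div :: "'y set \<Rightarrow> ('y \<Rightarrow> real) \<Rightarrow> ('y \<Rightarrow> real) \<Rightarrow> real" where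
  "KL_div Y p q = (\<Sum>y\<in>Y. p y * ln (p y / q y))"

definition d_KL ::
  "'x measure \<Rightarrow> 'y set \<Rightarrow> ('x \<Rightarrow> 'v::euclidean_space) \<Rightarrow> ('y \<Rightarrow> 'v)
     \<Rightarrow> ('x \<Rightarrow> 'v) \<Rightarrow> ('y \<Rightarrow> 'v) \<Rightarrow> ennreal" where
  "d_KL M Y f g f' g' =
     (\<integral>\<^sup>+ x. ennreal (KL_div Y (p_model Y f g x) (p_model Y f' g' x)) \<partial>M)"

definition lower_bounded ::
  "'x measure \<Rightarrow> 'y set \<Rightarrow> real \<Rightarrow> ('x \<Rightarrow> 'v::euclidean_space) \<Rightarrow> ('y \<Rightarrow> 'v) \<Rightarrow> bool" where
  "lower_bounded M Y \<tau> f g \<longleftrightarrow> \<tau> > 0 \<and> (AE x in M. \<forall>y\<in>Y. p_model Y f g x y \<ge> \<tau>)"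

end

theory Submission
  imports Defs
begin

text \<open>At each input let \<open>p\<close>, \<open>q\<close> be the softmax distributions of the logit vectors \<open>u\<close>,
  \<open>v\<close>. Then KL(p || q) = log E_p exp(w - E_p w) is the centred log-moment generating function of
  \<open>w = v - u\<close> under \<open>p\<close>; since every |w_y| is at most |u - v|, Hoeffding's lemma bounds it by
  |u - v|^2/2. Conversely \<open>ln p - ln q\<close> differs from \<open>u - v\<close> by a constant, and \<open>u - v\<close> sums
  to zero because the unembeddings do, so |u - v|^2 \<le> |ln p - ln q|^2. The elementary inequality
  min(a,b) (ln a - ln b)^2 \<le> 2 (a ln(a/b) - a + b), summed over the labels, bounds this by
  (2/\<tau>) KL(p || q), and 2/\<tau> \<le> 4 ln(\<tau>)^2/\<tau> once \<tau> \<le> 1/e. Both bounds hold pointwise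
  and are integrated over the inputs.\<close>

lemma min_one_exp_mult_sq_le:
  fixes t :: real
  shows "min 1 (exp t) * t\<^sup>2 \<le> 2 * (t * exp t - exp t + 1)"
proof (cases "0 \<le> t")
  case True
  define h where "h s = 2 * (s * exp s - exp s + 1) - s\<^sup>2" for s :: real
  have "h 0 \<le> h t"
  proof (rule DERIV_nonneg_imp_increasing_open[OF True])
    fix s :: real assume "0 < s" "s < t"
    then have "2 * s * (exp s - 1) \<ge> 0" by simp
    moreover have "DERIV h s :> 2 * s * (exp s - 1)"
      unfolding h_def by (auto intro!: derivative_eq_intros simp: algebra_simps power2_eq_square)
    ultimately show "\<exists>y. DERIV h s :> y \<and> y \<ge> 0" by blast
  qed (simp add: h_def continuous_intros)
  moreover have "min 1 (exp t) = 1" using True by simp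
  ultimately show ?thesis by (simp add: h_def)
next
  case False
  define h where "h s = 2 * (s * exp s - exp s + 1) - exp s * s\<^sup>2" for s :: real
  have "h 0 \<le> h t"
  proof (rule DERIV_nonpos_imp_decreasing_open[of t 0])
    fix s :: real
    have "DERIV h s :> - (exp s * s\<^sup>2)"
      unfolding h_def by (auto intro!: derivative_eq_intros simp: algebra_simps power2_eq_square)
    then show "\<exists>y. DERIV h s :> y \<and> y \<le> 0" by force
  qed (use False in \<open>simp_all add: h_def continuous_intros\<close>)
  moreover have "min 1 (exp t) = exp t" using False by simp
  ultimately show ?thesis by (simp add: h_def)
qed

lemma min_mult_sq_ln_diff_le:
  fixes a b :: real
  assumes "0 < a" "0 < b"
  shows "min a b * (ln a - ln b)\<^sup>2 \<le> 2 * (a * (ln a - ln b) - a + b)"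
proof -
  define t where "t = ln a - ln b"
  have a: "a = b * exp t" using assms by (simp add: t_def exp_diff)
  have "min a b * t\<^sup>2 = b * (min 1 (exp t) * t\<^sup>2)"
    using min_mult_distrib_left[of b 1 "exp t"] \<open>0 < b\<close> by (simp add: a mult.commute min.commute)
  also have "\<dots> \<le> b * (2 * (t * exp t - exp t + 1))"
    by (rule mult_left_mono[OF min_one_exp_mult_sq_le]) (use \<open>0 < b\<close> in simp)
  also have "\<dots> = 2 * (a * t - a + b)" by (simp add: a algebra_simps)
  finally show ?thesis by (simp add: t_def)
qed

lemma sum_sq_le_sum_sq_diff_const:
  fixes w :: "'a \<Rightarrow> real"
  assumes "(\<Sum>y\<in>Y. w y) = 0"
  shows "(\<Sum>y\<in>Y. (w y)\<^sup>2) \<le> (\<Sum>y\<in>Y. (w y - c)\<^sup>2)"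
proof -
  have "(\<Sum>y\<in>Y. (w y - c)\<^sup>2) = (\<Sum>y\<in>Y. (w y)\<^sup>2 - 2 * c * w y + c\<^sup>2)"
    by (simp add: power2_eq_square algebra_simps)
  also have "\<dots> = (\<Sum>y\<in>Y. (w y)\<^sup>2) - 2 * c * (\<Sum>y\<in>Y. w y) + card Y * c\<^sup>2"
    by (simp add: sum.distrib sum_subtractf sum_distrib_left)
  finally show ?thesis using assms by simp
qed

lemma KL_div_ge_sq_ln_diff:
  fixes p q :: "'a \<Rightarrow> real"
  assumes "0 < \<tau>" "\<And>y. y \<in> Y \<Longrightarrow> \<tau> \<le> p y" "\<And>y. y \<in> Y \<Longrightarrow> \<tau> \<le> q y"
    and "(\<Sum>y\<in>Y. p y) = (\<Sum>y\<in>Y. q y)"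
  shows "\<tau> * (\<Sum>y\<in>Y. (ln (p y) - ln (q y))\<^sup>2) \<le> 2 * KL_div Y p q"
proof -
  have pos: "0 < p y" "0 < q y" if "y \<in> Y" for y
    using assms(1-3) that by (auto intro: less_le_trans)
  have "\<tau> * (\<Sum>y\<in>Y. (ln (p y) - ln (q y))\<^sup>2) = (\<Sum>y\<in>Y. \<tau> * (ln (p y) - ln (q y))\<^sup>2)"
    by (simp add: sum_distrib_left)
  also have "\<dots> \<le> (\<Sum>y\<in>Y. 2 * (p y * (ln (p y) - ln (q y)) - p y + q y))"
  proof (rule sum_mono)
    fix y assume "y \<in> Y"
    then have "\<tau> \<le> min (p y) (q y)" using assms(2,3) by simp
    then have "\<tau> * (ln (p y) - ln (q y))\<^sup>2 \<le> min (p y) (q y) * (ln (p y) - ln (q y))\<^sup>2"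
      by (rule mult_right_mono) simp
    also have "\<dots> \<le> 2 * (p y * (ln (p y) - ln (q y)) - p y + q y)"
      using pos \<open>y \<in> Y\<close> by (intro min_mult_sq_ln_diff_le)
    finally show "\<tau> * (ln (p y) - ln (q y))\<^sup>2 \<le> 2 * (p y * (ln (p y) - ln (q y)) - p y + q y)" .
  qed
  also have "\<dots> = 2 * (\<Sum>y\<in>Y. p y * (ln (p y) - ln (q y)))"
    using assms(4) by (simp add: sum.distrib sum_subtractf flip: sum_distrib_left)
  also have "\<dots> = 2 * KL_div Y p q"
    unfolding KL_div_def using pos by (simp add: ln_divide_pos)
  finally show ?thesis .
qed

lemma pmf_of_finite_weights:
  fixes p :: "'a \<Rightarrow> real"
  assumes "finite A" "\<And>x. x \<in> A \<Longrightarrow> 0 \<le> p x" "(\<Sum>x\<in>A. p x) = 1"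
  obtains P where "\<And>x. pmf P x = (if x \<in> A then p x else 0)"
proof
  define p' where "p' x = (if x \<in> A then p x else 0)" for x
  have "(\<integral>\<^sup>+x. ennreal (p' x) \<partial>count_space UNIV) = (\<Sum>x\<in>A. ennreal (p' x))"
    using assms(1) by (intro nn_integral_count_space') (auto simp: p'_def)
  also have "\<dots> = 1"
    using assms(2,3) by (simp add: p'_def sum_ennreal)
  finally show "pmf (embed_pmf p') x = (if x \<in> A then p x else 0)" for x
    using assms(2) by (subst pmf_embed_pmf) (auto simp: p'_def)
qed

lemma Hoeffdings_lemma_finite_sum:
  fixes p X :: "'a \<Rightarrow> real"
  assumes "finite A" "\<And>x. x \<in> A \<Longrightarrow> 0 \<le> p x" "(\<Sum>x\<in>A. p x) = 1"
    and "\<And>x. x \<in> A \<Longrightarrow> X x \<in> {a..b}"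
  shows "(\<Sum>x\<in>A. p x * exp (X x - (\<Sum>z\<in>A. p z * X z))) \<le> exp ((b - a)\<^sup>2 / 8)"
proof -
  obtain P where P: "\<And>x. pmf P x = (if x \<in> A then p x else 0)"
    using pmf_of_finite_weights assms(1-3) by blast
  have set_P: "set_pmf P \<subseteq> A" by (auto simp: set_pmf_eq P split: if_splits)
  interpret interval_bounded_random_variable "measure_pmf P" X a b
    by unfold_locales (use set_P assms(4) in \<open>auto intro!: AE_pmfI\<close>)
  have mean: "(\<integral>x. X x \<partial>measure_pmf P) = (\<Sum>z\<in>A. p z * X z)"
    using set_P assms(1)
    by (subst integral_measure_pmf_real[where A = A]) (auto simp: P mult.commute)
  have "ennreal (\<Sum>x\<in>A. p x * exp (X x - (\<Sum>z\<in>A. p z * X z)))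
      = (\<Sum>x\<in>A. ennreal (exp (X x - (\<Sum>z\<in>A. p z * X z))) * pmf P x)"
    using assms(2) by (subst sum_ennreal[symmetric]) (auto simp: P ennreal_mult' mult.commute)
  also have "\<dots> = (\<integral>\<^sup>+x. ennreal (exp (1 * (X x - (\<integral>x. X x \<partial>measure_pmf P)))) \<partial>measure_pmf P)"
    using set_P assms(1) by (subst nn_integral_measure_pmf_support[where A = A]) (auto simp: mean)
  also have "\<dots> \<le> ennreal (exp (1\<^sup>2 * (b - a)\<^sup>2 / 8))"
    by (rule Hoeffdings_lemma_nn_integral) simp
  finally show ?thesis by simp
qed

definition softmax :: "'y set \<Rightarrow> ('y \<Rightarrow> real) \<Rightarrow> 'y \<Rightarrow> real" where
  "softmax Y u y = exp (u y) / (\<Sum>z\<in>Y. exp (u z))"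

context
  fixes Y :: "'y set"
  assumes finite_Y: "finite Y" and Y_nonempty: "Y \<noteq> {}"
begin

lemma sum_exp_pos: "0 < (\<Sum>y\<in>Y. exp (u y :: real))"
  by (rule sum_pos[OF finite_Y Y_nonempty]) simp

lemma softmax_pos: "0 < softmax Y u y"
  using sum_exp_pos[of u] by (simp add: softmax_def)

lemma sum_softmax: "(\<Sum>y\<in>Y. softmax Y u y) = 1"
  using sum_exp_pos[of u] by (simp add: softmax_def flip: sum_divide_distrib)

lemma ln_softmax: "ln (softmax Y u y) = u y - ln (\<Sum>z\<in>Y. exp (u z))"
  using sum_exp_pos[of u] by (simp add: softmax_def ln_div)

lemma KL_div_softmax_eq_ln_centered_mgf:
  "KL_div Y (softmax Y u) (softmax Y v) =
     ln (\<Sum>y\<in>Y. softmax Y u y * exp (v y - u y - (\<Sum>z\<in>Y. softmax Y u z * (v z - u z))))"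
proof -
  define Zu where "Zu = (\<Sum>y\<in>Y. exp (u y))"
  define Zv where "Zv = (\<Sum>y\<in>Y. exp (v y))"
  define m where "m = (\<Sum>z\<in>Y. softmax Y u z * (v z - u z))"
  have Zu: "0 < Zu" and Zv: "0 < Zv" unfolding Zu_def Zv_def by (fact sum_exp_pos)+
  have mgf: "(\<Sum>y\<in>Y. softmax Y u y * exp (v y - u y - m)) = exp (- m) / Zu * Zv"
  proof -
    have "softmax Y u y * exp (v y - u y - m) = exp (- m) / Zu * exp (v y)" for y
      by (simp add: softmax_def Zu_def exp_diff exp_minus exp_add field_simps)
    then show ?thesis unfolding Zv_def by (simp only: sum_distrib_left)
  qed
  have "KL_div Y (softmax Y u) (softmax Y v) = (\<Sum>y\<in>Y. softmax Y u y * (u y - v y - ln Zu + ln Zv))"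
    unfolding KL_div_def
    by (intro sum.cong refl) (simp add: ln_divide_pos[OF softmax_pos softmax_pos] ln_softmax Zu_def Zv_def)
  also have "\<dots> = (\<Sum>y\<in>Y. softmax Y u y * (u y - v y)) + (ln Zv - ln Zu) * (\<Sum>y\<in>Y. softmax Y u y)"
    unfolding sum_distrib_left sum.distrib[symmetric] by (intro sum.cong refl) (simp add: algebra_simps)
  also have "(\<Sum>y\<in>Y. softmax Y u y * (u y - v y)) = - m"
    unfolding m_def sum_negf[symmetric] by (intro sum.cong refl) (simp add: algebra_simps)
  also have "- m + (ln Zv - ln Zu) * (\<Sum>y\<in>Y. softmax Y u y) = ln (exp (- m) / Zu * Zv)"
    using Zu Zv by (simp add: sum_softmax ln_mult ln_div)
  finally show ?thesis unfolding m_def[symmetric] mgf .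
qed

lemma KL_div_softmax_le: "KL_div Y (softmax Y u) (softmax Y v) \<le> (\<Sum>y\<in>Y. (u y - v y)\<^sup>2) / 2"
proof -
  define R where "R = sqrt (\<Sum>y\<in>Y. (u y - v y)\<^sup>2)"
  have R_sq: "R\<^sup>2 = (\<Sum>y\<in>Y. (u y - v y)\<^sup>2)" by (simp add: R_def sum_nonneg)
  have "v y - u y \<in> {-R..R}" if "y \<in> Y" for y
  proof -
    have "(v y - u y)\<^sup>2 \<le> (\<Sum>y\<in>Y. (u y - v y)\<^sup>2)"
      using member_le_sum[of y Y "\<lambda>y. (u y - v y)\<^sup>2"] finite_Y that by (simp add: power2_commute)
    then have "\<bar>v y - u y\<bar> \<le> R" unfolding R_def by (intro real_le_rsqrt) simp
    then show ?thesis by (simp add: abs_le_iff)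
  qed
  then have "(\<Sum>y\<in>Y. softmax Y u y * exp (v y - u y - (\<Sum>z\<in>Y. softmax Y u z * (v z - u z))))
      \<le> exp ((R - - R)\<^sup>2 / 8)"
    by (intro Hoeffdings_lemma_finite_sum[where X = "\<lambda>y. v y - u y"] finite_Y sum_softmax
        softmax_pos[THEN less_imp_le])
  also have "(R - - R)\<^sup>2 / 8 = (\<Sum>y\<in>Y. (u y - v y)\<^sup>2) / 2"
    unfolding R_sq[symmetric] by (simp add: power2_eq_square field_simps)
  finally have "ln (\<Sum>y\<in>Y. softmax Y u y * exp (v y - u y - (\<Sum>z\<in>Y. softmax Y u z * (v z - u z))))
      \<le> ln (exp ((\<Sum>y\<in>Y. (u y - v y)\<^sup>2) / 2))"
    by (rule ln_mono) (auto intro!: sum_pos[OF finite_Y Y_nonempty] mult_pos_pos softmax_pos)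
  then show ?thesis unfolding KL_div_softmax_eq_ln_centered_mgf by simp
qed

lemma KL_div_softmax_ge:
  fixes u v :: "'y \<Rightarrow> real"
  assumes "(\<Sum>y\<in>Y. u y - v y) = 0" "0 < \<tau>"
    and "\<And>y. y \<in> Y \<Longrightarrow> \<tau> \<le> softmax Y u y" "\<And>y. y \<in> Y \<Longrightarrow> \<tau> \<le> softmax Y v y"
  shows "\<tau> * (\<Sum>y\<in>Y. (u y - v y)\<^sup>2) \<le> 2 * KL_div Y (softmax Y u) (softmax Y v)"
proof -
  have "ln (softmax Y u y) - ln (softmax Y v y) =
      u y - v y - (ln (\<Sum>z\<in>Y. exp (u z)) - ln (\<Sum>z\<in>Y. exp (v z)))" for y
    by (simp add: ln_softmax)
  then have "(\<Sum>y\<in>Y. (u y - v y)\<^sup>2) \<le> (\<Sum>y\<in>Y. (ln (softmax Y u y) - ln (softmax Y v y))\<^sup>2)"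
    using sum_sq_le_sum_sq_diff_const[OF assms(1)] by presburger
  then have "\<tau> * (\<Sum>y\<in>Y. (u y - v y)\<^sup>2)
      \<le> \<tau> * (\<Sum>y\<in>Y. (ln (softmax Y u y) - ln (softmax Y v y))\<^sup>2)"
    using assms(2) by simp
  also have "\<dots> \<le> 2 * KL_div Y (softmax Y u) (softmax Y v)"
    using assms by (intro KL_div_ge_sq_ln_diff) (simp_all add: sum_softmax)
  finally show ?thesis .
qed

end

lemma ln_sq_ge_one:
  fixes x :: real
  assumes "0 < x" "x \<le> exp (-1)"
  shows "1 \<le> (ln x)\<^sup>2"
proof -
  have "ln x \<le> ln (exp (-1))" using assms by (intro ln_mono)
  then have "1 \<le> - ln x" by simp
  then have "1 \<le> (- ln x)\<^sup>2" by (rule one_le_power)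
  then show ?thesis by simp
qed

lemma p_model_eq_softmax: "p_model Y f g x = softmax Y (logit f g x)"
  by (simp add: fun_eq_iff p_model_def softmax_def logit_def)

lemma sum_logit_diff_eq_0:
  assumes "(\<Sum>y\<in>Y. g y) = 0" "(\<Sum>y\<in>Y. g' y) = 0"
  shows "(\<Sum>y\<in>Y. logit f g x y - logit f' g' x y) = 0"
  using assms by (simp add: logit_def sum_subtractf flip: inner_sum_right)

lemma sq_logit_dist_le_KL_div_p_model:
  assumes "finite Y" "Y \<noteq> {}" "(\<Sum>y\<in>Y. g y) = 0" "(\<Sum>y\<in>Y. g' y) = 0"
    and "0 < \<tau>" "\<tau> \<le> exp (-1)"
    and "\<forall>y\<in>Y. \<tau> \<le> p_model Y f g x y" "\<forall>y\<in>Y. \<tau> \<le> p_model Y f' g' x y"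
  shows "(\<Sum>y\<in>Y. (logit f g x y - logit f' g' x y)\<^sup>2)
    \<le> 4 * (ln \<tau>)\<^sup>2 / \<tau> * KL_div Y (p_model Y f g x) (p_model Y f' g' x)"
    (is "?S \<le> _ * ?K")
proof -
  have lower: "\<tau> * ?S \<le> 2 * ?K"
    unfolding p_model_eq_softmax
    using assms(5-8) sum_logit_diff_eq_0[OF assms(3,4), of f x f']
    by (intro KL_div_softmax_ge[OF assms(1,2)]) (auto simp: p_model_eq_softmax)
  moreover have "0 \<le> ?S" by (simp add: sum_nonneg)
  ultimately have "0 \<le> ?K" using \<open>0 < \<tau>\<close> mult_nonneg_nonneg[of \<tau> ?S] by linarith
  have "?S \<le> 2 / \<tau> * ?K" using lower \<open>0 < \<tau>\<close> by (simp add: field_simps mult.commute)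
  also have "\<dots> \<le> 4 * (ln \<tau>)\<^sup>2 / \<tau> * ?K"
    using ln_sq_ge_one[OF assms(5,6)] \<open>0 < \<tau>\<close> \<open>0 \<le> ?K\<close>
    by (intro mult_right_mono divide_right_mono) simp_all
  finally show ?thesis .
qed

lemma nn_integral_ennreal_cmult:
  assumes "0 \<le> c" "(\<lambda>x. ennreal (f x)) \<in> borel_measurable M"
  shows "ennreal c * (\<integral>\<^sup>+x. ennreal (f x) \<partial>M) = (\<integral>\<^sup>+x. ennreal (c * f x) \<partial>M)"
  using assms by (simp add: ennreal_mult' flip: nn_integral_cmult)

lemma KL_div_p_model_measurable [measurable]:
  assumes [measurable]: "f \<in> borel_measurable M" "f' \<in> borel_measurable M"
  shows "(\<lambda>x. KL_div Y (p_model Y f g x) (p_model Y f' g' x)) \<in> borel_measurable M"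
  unfolding KL_div_def p_model_def by measurable

lemma two_d_KL_le_d_logit2:
  assumes "finite Y" "Y \<noteq> {}" "f \<in> borel_measurable M" "f' \<in> borel_measurable M"
  shows "2 * d_KL M Y f g f' g' \<le> d_logit2 M Y f g f' g'"
proof -
  have "2 * d_KL M Y f g f' g' = (\<integral>\<^sup>+x. ennreal (2 * KL_div Y (p_model Y f g x) (p_model Y f' g' x)) \<partial>M)"
    unfolding d_KL_def using assms(3,4) by (subst nn_integral_ennreal_cmult[of 2, symmetric]) simp_all
  also have "\<dots> \<le> d_logit2 M Y f g f' g'"
    unfolding d_logit2_def p_model_eq_softmax logit_def[symmetric]
    using KL_div_softmax_le[OF assms(1,2)] by (intro nn_integral_mono ennreal_leI) (simp add: field_simps)
  finally show ?thesis .
qed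

lemma d_logit2_le_d_KL:
  assumes "finite Y" "Y \<noteq> {}" "in_model_class M Y f g" "in_model_class M Y f' g'"
    and "0 < \<tau>" "\<tau> \<le> exp (-1)" "lower_bounded M Y \<tau> f g" "lower_bounded M Y \<tau> f' g'"
  shows "d_logit2 M Y f g f' g' \<le> ennreal (4 * (ln \<tau>)\<^sup>2 / \<tau>) * d_KL M Y f g f' g'"
proof -
  have [measurable]: "f \<in> borel_measurable M" "f' \<in> borel_measurable M"
    and g_sum: "(\<Sum>y\<in>Y. g y) = 0" "(\<Sum>y\<in>Y. g' y) = 0"
    using assms(3,4) by (simp_all add: in_model_class_def)
  from assms(7,8) have "AE x in M. \<forall>y\<in>Y. \<tau> \<le> p_model Y f g x y"
    and "AE x in M. \<forall>y\<in>Y. \<tau> \<le> p_model Y f' g' x y"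
    by (simp_all add: lower_bounded_def)
  then have "AE x in M. (\<Sum>y\<in>Y. (logit f g x y - logit f' g' x y)\<^sup>2)
      \<le> 4 * (ln \<tau>)\<^sup>2 / \<tau> * KL_div Y (p_model Y f g x) (p_model Y f' g' x)"
    by eventually_elim (rule sq_logit_dist_le_KL_div_p_model[OF assms(1,2) g_sum assms(5,6)])
  then show ?thesis
    unfolding d_logit2_def d_KL_def using assms(5)
    by (subst nn_integral_ennreal_cmult) (auto intro!: nn_integral_mono_AE ennreal_leI)
qed

theorem mainTheorem1:
  fixes M :: "'x measure" and Y :: "'y set"
    and f f' :: "'x \<Rightarrow> 'v::euclidean_space" and g g' :: "'y \<Rightarrow> 'v"
  assumes "prob_space M"
    and "finite Y" and "Y \<noteq> {}"
    and "in_model_class M Y f g" and "in_model_class M Y f' g'"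
  shows "d_logit2 M Y f g f' g' \<ge> 2 * d_KL M Y f g f' g'
    \<and> (\<forall>\<tau>::real. 0 < \<tau> \<and> \<tau> < 1/3 \<and> lower_bounded M Y \<tau> f g \<and> lower_bounded M Y \<tau> f' g'
         \<longrightarrow> d_logit2 M Y f g f' g' \<le> ennreal (4 * (ln \<tau>)\<^sup>2 / \<tau>) * d_KL M Y f g f' g')"
proof -
  have "2 * d_KL M Y f g f' g' \<le> d_logit2 M Y f g f' g'"
    using assms(2-5) by (intro two_d_KL_le_d_logit2) (simp_all add: in_model_class_def)
  moreover have "d_logit2 M Y f g f' g' \<le> ennreal (4 * (ln \<tau>)\<^sup>2 / \<tau>) * d_KL M Y f g f' g'"
    if "0 < \<tau>" "\<tau> < 1/3" "lower_bounded M Y \<tau> f g" "lower_bounded M Y \<tau> f' g'" for \<tau> :: real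
  proof -
    have "\<tau> * exp 1 \<le> \<tau> * 3" using exp_le \<open>0 < \<tau>\<close> by simp
    then have "\<tau> \<le> exp (-1)" using \<open>\<tau> < 1/3\<close> by (simp add: exp_minus field_simps)
    then show ?thesis using assms(2-5) that by (intro d_logit2_le_d_KL) simp_all
  qed
  ultimately show ?thesis by blast
qed

end
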